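(* Let $n\ge1$. Let $H_1,H_2$ be two edge-disjoint Hamilton cycles of $G_{n,3}$ and $E_1,E_2$ two edge-disjoint directed Hamilton cycles of $Q_{2n}$ (starting at $\mathbf 0$). Then the four Hamilton cycles $g(E_1,H_1)$, $g(E_1,H_2)$, $g(E_2,H_1)$, $g(E_2,H_2)$ of $Q_{6n}$ are pairwise edge-disjoint.
   Context: $Q_{2n}$ is realized as the graph on quaternary strings $q_1\cdots q_n$, $q_i\in\{0,1,2,3\}$, adjacent iff they differ in exactly one position and there by $\pm1\pmod4$; $\mathbf 0=0\cdots0$. $G_{n,3}=C_{4^n}\Box C_{4^n}\Box C_{4^n}$ has vertex set $(\mathbb Z/4^n\mathbb Z)^3$, adjacency: differ in exactly one coordinate, by $\pm1\pmod{4^n}$. For a directed Hamilton cycle $E$ of $Q_{2n}$ listing vertices $e_0=\mathbf 0,e_1,\dots,e_{4^n-1}$, put $\pi_E(e_p)=p$. Identify $V(Q_{6n})$ with triples $(u,w,t)$ of quaternary strings of length $n$ (digits $1..n$, $n+1..2n$, $2n+1..3n$), so $Q_{6n}=Q_{2n}\Box Q_{2n}\Box Q_{2n}$, and let $\Psi_E(u,w,t)=(\pi_E(u),\pi_E(w),\pi_E(t))$; $\Psi_E^{-1}$ maps edges of $G_{n,3}$ to edges of $Q_{6n}$. For a Hamilton cycle $H$ of $G_{n,3}$, $g(E,H):=\Psi_E^{-1}(H)$, a Hamilton cycle of $Q_{6n}$. *)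

theory Defs
  imports Main
begin

(* Vertices of Q_{2n}: quaternary strings of length n, as lists over {0,1,2,3}. *)
definition quat_strings :: "nat \<Rightarrow> nat list set" where
  "quat_strings n = {xs. length xs = n \<and> (\<forall>x\<in>set xs. x < 4)}"

definition Q_adj :: "nat \<Rightarrow> nat list \<Rightarrow> nat list \<Rightarrow> bool" where
  "Q_adj n u v \<longleftrightarrow> u \<in> quat_strings n \<and> v \<in> quat_strings n \<and>
     (\<exists>i<n. (\<forall>j<n. j \<noteq> i \<longrightarrow> u ! j = v ! j) \<and>
            ((u ! i + 1) mod 4 = v ! i \<or> (v ! i + 1) mod 4 = u ! i))"

definition zero_str :: "nat \<Rightarrow> nat list" where
  "zero_str n = replicate n 0"

(* Vertices of G_{n,3} = C_{4^n} x C_{4^n} x C_{4^n}: triples in (Z/4^n Z)^3 *)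
definition G_verts :: "nat \<Rightarrow> (nat \<times> nat \<times> nat) set" where
  "G_verts n = {..<4^n} \<times> {..<4^n} \<times> {..<4^n}"

definition cyc_adj :: "nat \<Rightarrow> nat \<Rightarrow> nat \<Rightarrow> bool" where
  "cyc_adj m x y \<longleftrightarrow> (x + 1) mod m = y \<or> (y + 1) mod m = x"

definition G_adj :: "nat \<Rightarrow> nat \<times> nat \<times> nat \<Rightarrow> nat \<times> nat \<times> nat \<Rightarrow> bool" where
  "G_adj n p q \<longleftrightarrow> p \<in> G_verts n \<and> q \<in> G_verts n \<and>
     (case p of (a, b, c) \<Rightarrow> case q of (a', b', c') \<Rightarrow>
        (cyc_adj (4^n) a a' \<and> b = b' \<and> c = c') \<or>
        (a = a' \<and> cyc_adj (4^n) b b' \<and> c = c') \<or>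
        (a = a' \<and> b = b' \<and> cyc_adj (4^n) c c'))"

definition ham_cycle :: "'a set \<Rightarrow> ('a \<Rightarrow> 'a \<Rightarrow> bool) \<Rightarrow> 'a list \<Rightarrow> bool" where
  "ham_cycle V adj vs \<longleftrightarrow> distinct vs \<and> set vs = V \<and> 3 \<le> length vs \<and>
     (\<forall>i<length vs. adj (vs ! i) (vs ! (Suc i mod length vs)))"

definition cyc_edges :: "'a list \<Rightarrow> 'a set set" where
  "cyc_edges vs = {{vs ! i, vs ! (Suc i mod length vs)} | i. i < length vs}"

definition edge_disjoint :: "'a list \<Rightarrow> 'a list \<Rightarrow> bool" where
  "edge_disjoint xs ys \<longleftrightarrow> cyc_edges xs \<inter> cyc_edges ys = {}"

definition dir_ham_cycle_Q :: "nat \<Rightarrow> nat list list \<Rightarrow> bool" where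
  "dir_ham_cycle_Q n e \<longleftrightarrow> ham_cycle (quat_strings n) (Q_adj n) e \<and> e ! 0 = zero_str n"

definition pi_E :: "nat list list \<Rightarrow> nat list \<Rightarrow> nat" where
  "pi_E e v = (THE p. p < length e \<and> e ! p = v)"

definition Psi_E :: "nat \<Rightarrow> nat list list \<Rightarrow> nat list \<Rightarrow> nat \<times> nat \<times> nat" where
  "Psi_E n e s = (pi_E e (take n s), pi_E e (take n (drop n s)), pi_E e (drop (2*n) s))"

definition Psi_E_inv :: "nat \<Rightarrow> nat list list \<Rightarrow> nat \<times> nat \<times> nat \<Rightarrow> nat list" where
  "Psi_E_inv n e = inv_into (quat_strings (3*n)) (Psi_E n e)"

definition g_map :: "nat \<Rightarrow> nat list list \<Rightarrow> (nat \<times> nat \<times> nat) list \<Rightarrow> nat list list" where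
  "g_map n e H = map (Psi_E_inv n e) H"

end

theory Submission
  imports Defs
begin

text \<open>Under \<open>\<Psi>\<^sub>E\<^sup>-\<^sup>1\<close> a vertex \<open>(a, b, c)\<close> of \<open>G\<^sub>n\<^sub>,\<^sub>3\<close> becomes the string
  \<open>e\<^sub>a e\<^sub>b e\<^sub>c\<close>, and an edge of \<open>G\<^sub>n\<^sub>,\<^sub>3\<close> changes one coordinate by \<open>\<plusminus>1\<close>, so its image
  changes one block of \<open>n\<close> digits along an edge of \<open>E\<close>. Since concatenation of blocks of
  length \<open>n\<close> is injective, two lifts \<open>g(E, H)\<close> and \<open>g(E, H')\<close> share an edge only if
  \<open>H\<close> and \<open>H'\<close> do, while an edge shared by \<open>g(E\<^sub>1, H)\<close> and \<open>g(E\<^sub>2, H')\<close> would be an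
  edge of both \<open>E\<^sub>1\<close> and \<open>E\<^sub>2\<close>.\<close>

lemma Suc_mod_less: "i < n \<Longrightarrow> Suc i mod n < (n::nat)"
  by (rule mod_less_divisor) simp

lemma Suc_mod_neq:
  assumes "a < n" and "2 \<le> n"
  shows "Suc a mod n \<noteq> (a::nat)"
proof (cases "Suc a < n")
  case False
  then have "Suc a = n" using assms(1) by simp
  then show ?thesis using assms(2) by simp
qed (use assms(1) in simp)

lemma cyc_edges_eq_image:
  "cyc_edges vs = (\<lambda>i. {vs ! i, vs ! (Suc i mod length vs)}) ` {..<length vs}"
  unfolding cyc_edges_def by blast

lemma cyc_edges_map: "cyc_edges (map f vs) = (\<lambda>X. f ` X) ` cyc_edges vs"
proof -
  have "{map f vs ! i, map f vs ! (Suc i mod length vs)} = f ` {vs ! i, vs ! (Suc i mod length vs)}"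
    if "i < length vs" for i
    using that Suc_mod_less[OF that] by simp
  then show ?thesis
    unfolding cyc_edges_eq_image image_image by (intro image_cong) simp_all
qed

lemma cyc_edges_subset_Pow_set: "cyc_edges vs \<subseteq> Pow (set vs)"
  unfolding cyc_edges_def by (auto intro!: nth_mem Suc_mod_less)

lemma edge_disjoint_map:
  assumes "inj_on f (set xs \<union> set ys)" and "edge_disjoint xs ys"
  shows "edge_disjoint (map f xs) (map f ys)"
proof -
  have "f ` X \<noteq> f ` Y" if X: "X \<in> cyc_edges xs" and Y: "Y \<in> cyc_edges ys" for X Y
  proof -
    have "X \<subseteq> set xs \<union> set ys" "Y \<subseteq> set xs \<union> set ys"
      using X Y cyc_edges_subset_Pow_set by blast+
    moreover have "X \<noteq> Y"
      using X Y assms(2) unfolding edge_disjoint_def by blast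
    ultimately show ?thesis
      using inj_on_image_eq_iff[OF assms(1)] by blast
  qed
  then show ?thesis
    unfolding edge_disjoint_def cyc_edges_map by blast
qed

lemma ham_cycle_map_edgeE:
  assumes "ham_cycle V adj vs" and "X \<in> cyc_edges (map f vs)"
  obtains p q where "X = {f p, f q}" and "adj p q"
proof -
  obtain Y where "Y \<in> cyc_edges vs" and "X = f ` Y"
    using assms(2) unfolding cyc_edges_map by blast
  then obtain i where i: "i < length vs" and X: "X = f ` {vs ! i, vs ! (Suc i mod length vs)}"
    unfolding cyc_edges_def by blast
  have "adj (vs ! i) (vs ! (Suc i mod length vs))"
    using assms(1) i unfolding ham_cycle_def by blast
  moreover have "X = {f (vs ! i), f (vs ! (Suc i mod length vs))}"
    using X by simp
  ultimately show thesis
    using that by blast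
qed

lemma cyc_edge_nth: "i < length vs \<Longrightarrow> {vs ! i, vs ! (Suc i mod length vs)} \<in> cyc_edges vs"
  unfolding cyc_edges_def by blast

lemma cyc_adj_cyc_edge:
  assumes "distinct vs" and "3 \<le> length vs"
    and "cyc_adj (length vs) a b" and "a < length vs" and "b < length vs"
  shows "{vs ! a, vs ! b} \<in> cyc_edges vs" and "vs ! a \<noteq> vs ! b"
proof -
  from assms(3) consider "Suc a mod length vs = b" | "Suc b mod length vs = a"
    unfolding cyc_adj_def by auto
  then show "{vs ! a, vs ! b} \<in> cyc_edges vs"
    by cases (use cyc_edge_nth[OF assms(4)] cyc_edge_nth[OF assms(5)] in \<open>auto simp: insert_commute\<close>)
  have "a \<noteq> b"
    using assms(2-5) Suc_mod_neq[of a "length vs"] unfolding cyc_adj_def by auto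
  then show "vs ! a \<noteq> vs ! b"
    using assms by (simp add: nth_eq_iff_index_eq)
qed

lemma card_quat_strings: "card (quat_strings n) = 4 ^ n"
proof -
  have "quat_strings n = {xs. set xs \<subseteq> {..<4::nat} \<and> length xs = n}"
    unfolding quat_strings_def by auto
  then show ?thesis by (simp add: card_lists_length_eq)
qed

lemma length_quat_strings: "xs \<in> quat_strings n \<Longrightarrow> length xs = n"
  by (simp add: quat_strings_def)

lemma dir_ham_cycle_QD:
  assumes "dir_ham_cycle_Q n e"
  shows "distinct e" "set e = quat_strings n" "length e = 4 ^ n" "3 \<le> length e"
  using assms unfolding dir_ham_cycle_Q_def ham_cycle_def
  by (auto simp: card_quat_strings[symmetric] distinct_card[symmetric])

lemma pi_E_nth: "distinct e \<Longrightarrow> p < length e \<Longrightarrow> pi_E e (e ! p) = p"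
  unfolding pi_E_def by (rule the_equality) (auto simp: nth_eq_iff_index_eq)

lemma nth_pi_E: "distinct e \<Longrightarrow> v \<in> set e \<Longrightarrow> e ! pi_E e v = v"
  by (metis in_set_conv_nth pi_E_nth)

definition nth_triple :: "'a list \<Rightarrow> nat \<times> nat \<times> nat \<Rightarrow> 'a \<times> 'a \<times> 'a" where
  "nth_triple e = map_prod ((!) e) (map_prod ((!) e) ((!) e))"

definition concat3 :: "'a list \<times> 'a list \<times> 'a list \<Rightarrow> 'a list" where
  "concat3 = (\<lambda>(u, v, w). u @ v @ w)"

lemma nth_triple_apply [simp]: "nth_triple e (a, b, c) = (e ! a, e ! b, e ! c)"
  by (simp add: nth_triple_def)

lemma concat3_apply [simp]: "concat3 (u, v, w) = u @ v @ w"
  by (simp add: concat3_def)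

lemma inj_on_concat3: "inj_on concat3 {(u, v, w). length u = n \<and> length v = n}"
proof (rule inj_onI)
  fix x y
  assume "x \<in> {(u, v, w). length u = n \<and> length v = n}"
    and "y \<in> {(u, v, w). length u = n \<and> length v = n}" and "concat3 x = concat3 y"
  then show "x = y"
    by (cases x; cases y) simp
qed

lemma inj_on_nth_triple:
  "distinct e \<Longrightarrow> inj_on (nth_triple e) ({..<length e} \<times> {..<length e} \<times> {..<length e})"
  by (rule inj_onI) (clarsimp simp: nth_eq_iff_index_eq)

lemma nth_triple_in_quat_strings:
  assumes "dir_ham_cycle_Q n e" and "p \<in> G_verts n"
  shows "nth_triple e p \<in> quat_strings n \<times> quat_strings n \<times> quat_strings n"
proof -
  have "e ! i \<in> quat_strings n" if "i < 4 ^ n" for i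
    using that nth_mem[of i e] dir_ham_cycle_QD[OF assms(1)] by simp
  then show ?thesis
    using assms(2) unfolding G_verts_def by auto
qed

lemma concat3_nth_triple_in_quat_strings:
  assumes "dir_ham_cycle_Q n e" and "p \<in> G_verts n"
  shows "concat3 (nth_triple e p) \<in> quat_strings (3 * n)"
  using nth_triple_in_quat_strings[OF assms] unfolding quat_strings_def by auto

lemma Psi_E_concat3_nth_triple:
  assumes "dir_ham_cycle_Q n e" and "p \<in> G_verts n"
  shows "Psi_E n e (concat3 (nth_triple e p)) = p"
  using assms nth_triple_in_quat_strings[OF assms] dir_ham_cycle_QD[OF assms(1)]
  by (auto simp: G_verts_def Psi_E_def pi_E_nth length_quat_strings mult_2)

lemma concat3_nth_triple_Psi_E:
  assumes "dir_ham_cycle_Q n e" and "s \<in> quat_strings (3 * n)"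
  shows "concat3 (nth_triple e (Psi_E n e s)) = s"
proof -
  have blocks: "take n s \<in> set e" "take n (drop n s) \<in> set e" "drop (2 * n) s \<in> set e"
    using assms(2) set_take_subset[of n s] set_take_subset[of n "drop n s"]
      set_drop_subset[of n s] set_drop_subset[of "2 * n" s]
    unfolding dir_ham_cycle_QD(2)[OF assms(1)] quat_strings_def by auto
  have "s = take n s @ take n (drop n s) @ drop (2 * n) s"
    by (metis append_take_drop_id drop_drop mult_2)
  then show ?thesis
    using blocks by (simp add: Psi_E_def nth_pi_E[OF dir_ham_cycle_QD(1)[OF assms(1)]])
qed

lemma Psi_E_inv_eq:
  assumes "dir_ham_cycle_Q n e" and "p \<in> G_verts n"
  shows "Psi_E_inv n e p = concat3 (nth_triple e p)"
proof -
  have inj: "inj_on (Psi_E n e) (quat_strings (3 * n))"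
    using concat3_nth_triple_Psi_E[OF assms(1)] by (rule inj_on_inverseI)
  show ?thesis
    unfolding Psi_E_inv_def
    by (rule inv_into_f_eq[OF inj concat3_nth_triple_in_quat_strings[OF assms]
          Psi_E_concat3_nth_triple[OF assms]])
qed

lemma g_map_eq:
  assumes "dir_ham_cycle_Q n e" and "ham_cycle (G_verts n) (G_adj n) H"
  shows "g_map n e H = map concat3 (map (nth_triple e) H)"
  using assms Psi_E_inv_eq unfolding g_map_def ham_cycle_def by auto

lemma edge_disjoint_g_map_of_triples:
  assumes "dir_ham_cycle_Q n e1" "dir_ham_cycle_Q n e2"
    and "ham_cycle (G_verts n) (G_adj n) H1" "ham_cycle (G_verts n) (G_adj n) H2"
    and "edge_disjoint (map (nth_triple e1) H1) (map (nth_triple e2) H2)"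
  shows "edge_disjoint (g_map n e1 H1) (g_map n e2 H2)"
proof -
  have "set (map (nth_triple e) H) \<subseteq> {(u, v, w). length u = n \<and> length v = n}"
    if "dir_ham_cycle_Q n e" "ham_cycle (G_verts n) (G_adj n) H" for e H
    using that nth_triple_in_quat_strings[OF that(1)] unfolding ham_cycle_def
    by (force simp: quat_strings_def)
  then have "inj_on concat3 (set (map (nth_triple e1) H1) \<union> set (map (nth_triple e2) H2))"
    using assms(1-4) by (intro inj_on_subset[OF inj_on_concat3[of n]]) auto
  then show ?thesis
    unfolding g_map_eq[OF assms(1,3)] g_map_eq[OF assms(2,4)]
    using assms(5) by (rule edge_disjoint_map)
qed

lemma edge_disjoint_g_map_same_cycle:
  assumes "dir_ham_cycle_Q n e"
    and "ham_cycle (G_verts n) (G_adj n) H1" "ham_cycle (G_verts n) (G_adj n) H2"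
    and "edge_disjoint H1 H2"
  shows "edge_disjoint (g_map n e H1) (g_map n e H2)"
proof (rule edge_disjoint_g_map_of_triples[OF assms(1,1,2,3)])
  have "inj_on (nth_triple e) (G_verts n)"
    using inj_on_nth_triple[OF dir_ham_cycle_QD(1)[OF assms(1)]]
    by (simp add: G_verts_def dir_ham_cycle_QD(3)[OF assms(1)])
  then show "edge_disjoint (map (nth_triple e) H1) (map (nth_triple e) H2)"
    using assms(2-4) unfolding ham_cycle_def by (intro edge_disjoint_map) auto
qed

definition prod3_adj :: "'a list \<Rightarrow> 'a \<times> 'a \<times> 'a \<Rightarrow> 'a \<times> 'a \<times> 'a \<Rightarrow> bool" where
  "prod3_adj e = (\<lambda>(u1, u2, u3) (v1, v2, v3).
     ({u1, v1} \<in> cyc_edges e \<and> u1 \<noteq> v1 \<and> u2 = v2 \<and> u3 = v3) \<or>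
     ({u2, v2} \<in> cyc_edges e \<and> u1 = v1 \<and> u2 \<noteq> v2 \<and> u3 = v3) \<or>
     ({u3, v3} \<in> cyc_edges e \<and> u1 = v1 \<and> u2 = v2 \<and> u3 \<noteq> v3))"

lemma prod3_adj_edge_disjoint:
  assumes "edge_disjoint e1 e2" and "prod3_adj e1 x y" and "prod3_adj e2 x' y'"
  shows "{x, y} \<noteq> {x', y'}"
  using assms unfolding prod3_adj_def edge_disjoint_def doubleton_eq_iff
  by (auto split: prod.splits simp: insert_commute)

lemma G_adj_prod3_adj:
  assumes "dir_ham_cycle_Q n e" and "G_adj n p q"
  shows "prod3_adj e (nth_triple e p) (nth_triple e q)"
  using assms(2) cyc_adj_cyc_edge[OF dir_ham_cycle_QD(1,4)[OF assms(1)]]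
  unfolding G_adj_def G_verts_def prod3_adj_def dir_ham_cycle_QD(3)[OF assms(1)]
  by (auto split: prod.splits)

lemma edge_disjoint_g_map_disjoint_cycles:
  assumes "dir_ham_cycle_Q n e1" "dir_ham_cycle_Q n e2" and "edge_disjoint e1 e2"
    and "ham_cycle (G_verts n) (G_adj n) H1" "ham_cycle (G_verts n) (G_adj n) H2"
  shows "edge_disjoint (g_map n e1 H1) (g_map n e2 H2)"
proof (rule edge_disjoint_g_map_of_triples[OF assms(1,2,4,5)])
  have "X \<notin> cyc_edges (map (nth_triple e2) H2)"
    if X1: "X \<in> cyc_edges (map (nth_triple e1) H1)" for X
  proof
    assume "X \<in> cyc_edges (map (nth_triple e2) H2)"
    then obtain p' q' where X2: "X = {nth_triple e2 p', nth_triple e2 q'}" "G_adj n p' q'"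
      by (rule ham_cycle_map_edgeE[OF assms(5)])
    obtain p q where X1': "X = {nth_triple e1 p, nth_triple e1 q}" "G_adj n p q"
      using X1 by (rule ham_cycle_map_edgeE[OF assms(4)])
    show False
      using prod3_adj_edge_disjoint[OF assms(3) G_adj_prod3_adj[OF assms(1) X1'(2)]
          G_adj_prod3_adj[OF assms(2) X2(2)]] X1'(1) X2(1)
      by simp
  qed
  then show "edge_disjoint (map (nth_triple e1) H1) (map (nth_triple e2) H2)"
    unfolding edge_disjoint_def by blast
qed

theorem lemma5:
  fixes n :: nat and H1 H2 :: "(nat \<times> nat \<times> nat) list" and E1 E2 :: "nat list list"
  assumes "n \<ge> 1"
    and "ham_cycle (G_verts n) (G_adj n) H1" and "ham_cycle (G_verts n) (G_adj n) H2"
    and "edge_disjoint H1 H2"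
    and "dir_ham_cycle_Q n E1" and "dir_ham_cycle_Q n E2"
    and "edge_disjoint E1 E2"
  shows "edge_disjoint (g_map n E1 H1) (g_map n E1 H2) \<and>
         edge_disjoint (g_map n E1 H1) (g_map n E2 H1) \<and>
         edge_disjoint (g_map n E1 H1) (g_map n E2 H2) \<and>
         edge_disjoint (g_map n E1 H2) (g_map n E2 H1) \<and>
         edge_disjoint (g_map n E1 H2) (g_map n E2 H2) \<and>
         edge_disjoint (g_map n E2 H1) (g_map n E2 H2)"
  using edge_disjoint_g_map_same_cycle[OF assms(5,2,3,4)]
    edge_disjoint_g_map_same_cycle[OF assms(6,2,3,4)]
    edge_disjoint_g_map_disjoint_cycles[OF assms(5,6,7) assms(2,2)]
    edge_disjoint_g_map_disjoint_cycles[OF assms(5,6,7) assms(2,3)]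
    edge_disjoint_g_map_disjoint_cycles[OF assms(5,6,7) assms(3,2)]
    edge_disjoint_g_map_disjoint_cycles[OF assms(5,6,7) assms(3,3)]
  by blast

end
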